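(* Let $G:\mathcal{A}\to\mathcal{B}$ be a discrete opfibration. If $\mathcal{B}$ is quasi-Gröbner, then $\mathcal{A}$ is quasi-Gröbner.
   Context: A functor $G:\mathcal{A}\to\mathcal{B}$ is a discrete opfibration if for every object $a$ of $\mathcal{A}$ and every morphism $g:G(a)\to b$ in $\mathcal{B}$ there is a unique morphism $f$ out of $a$ with $G(f)=g$. Quasi-Gröbner: for a small category $\mathcal{C}$ and object $c$, an admissible order on morphisms out of $c$ is a choice of well-orders on each $\mathrm{Hom}(c,c')$ such that $f\prec f'$ implies $g\circ f\prec g\circ f'$ for all $g$; the preorder $f\le g$ iff $g=h\circ f$ for some $h$ gives a poset $|c/\mathcal{C}|$; a poset is Noetherian if every sequence $x_1,x_2,\dots$ has $i<j$ with $x_i\le x_j$. $\mathcal{C}$ is Gröbner if for every object $c$: (G1) morphisms out of $c$ admit an admissible order and (G2) $|c/\mathcal{C}|$ is Noetherian. A functor $\Phi:\mathcal{C}\to\mathcal{D}$ has property (F) if for every object $d$ of $\mathcal{D}$ there are finitely many objects $c_i$ and morphisms $f_i:d\to\Phi(c_i)$ such that every $f:d\to\Phi(c)$ factors as $\Phi(g)\circ f_i$ for some $i$ and $g:c_i\to c$. $\mathcal{D}$ is quasi-Gröbner if there are a Gröbner $\mathcal{C}$ and an essentially surjective functor $\mathcal{C}\to\mathcal{D}$ with property (F). *)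

theory Defs
  imports Main
begin

text \<open>Small categories, given by explicit carrier sets of objects and morphisms.
  Comp C g f is the composite g after f (defined when Cod f = Dom g).\<close>

record ('o, 'm) cat =
  Obj  :: "'o set"
  Arr  :: "'m set"
  Dom  :: "'m \<Rightarrow> 'o"
  Cod  :: "'m \<Rightarrow> 'o"
  Id   :: "'o \<Rightarrow> 'm"
  Comp :: "'m \<Rightarrow> 'm \<Rightarrow> 'm"

definition category :: "('o, 'm) cat \<Rightarrow> bool" where
  "category C \<longleftrightarrow>
     (\<forall>f\<in>Arr C. Dom C f \<in> Obj C \<and> Cod C f \<in> Obj C) \<and>
     (\<forall>a\<in>Obj C. Id C a \<in> Arr C \<and> Dom C (Id C a) = a \<and> Cod C (Id C a) = a) \<and>
     (\<forall>f\<in>Arr C. \<forall>g\<in>Arr C. Cod C f = Dom C g \<longrightarrow>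
         Comp C g f \<in> Arr C \<and> Dom C (Comp C g f) = Dom C f \<and> Cod C (Comp C g f) = Cod C g) \<and>
     (\<forall>f\<in>Arr C. Comp C (Id C (Cod C f)) f = f \<and> Comp C f (Id C (Dom C f)) = f) \<and>
     (\<forall>f\<in>Arr C. \<forall>g\<in>Arr C. \<forall>h\<in>Arr C. Cod C f = Dom C g \<longrightarrow> Cod C g = Dom C h \<longrightarrow>
         Comp C h (Comp C g f) = Comp C (Comp C h g) f)"

definition hom :: "('o, 'm) cat \<Rightarrow> 'o \<Rightarrow> 'o \<Rightarrow> 'm set" where
  "hom C a b = {f \<in> Arr C. Dom C f = a \<and> Cod C f = b}"

definition is_functor :: "('o1, 'm1) cat \<Rightarrow> ('o2, 'm2) cat \<Rightarrow> ('o1 \<Rightarrow> 'o2) \<Rightarrow> ('m1 \<Rightarrow> 'm2) \<Rightarrow> bool" where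
  "is_functor C D Fo Fm \<longleftrightarrow>
     category C \<and> category D \<and>
     (\<forall>a\<in>Obj C. Fo a \<in> Obj D) \<and>
     (\<forall>f\<in>Arr C. Fm f \<in> Arr D \<and> Dom D (Fm f) = Fo (Dom C f) \<and> Cod D (Fm f) = Fo (Cod C f)) \<and>
     (\<forall>a\<in>Obj C. Fm (Id C a) = Id D (Fo a)) \<and>
     (\<forall>f\<in>Arr C. \<forall>g\<in>Arr C. Cod C f = Dom C g \<longrightarrow> Fm (Comp C g f) = Comp D (Fm g) (Fm f))"

definition discrete_opfibration ::
  "('o1, 'm1) cat \<Rightarrow> ('o2, 'm2) cat \<Rightarrow> ('o1 \<Rightarrow> 'o2) \<Rightarrow> ('m1 \<Rightarrow> 'm2) \<Rightarrow> bool" where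
  "discrete_opfibration A B Go Gm \<longleftrightarrow>
     is_functor A B Go Gm \<and>
     (\<forall>a\<in>Obj A. \<forall>g\<in>Arr B. Dom B g = Go a \<longrightarrow>
        (\<exists>!f. f \<in> Arr A \<and> Dom A f = a \<and> Gm f = g))"

definition iso :: "('o, 'm) cat \<Rightarrow> 'm \<Rightarrow> bool" where
  "iso C f \<longleftrightarrow> f \<in> Arr C \<and>
     (\<exists>g \<in> hom C (Cod C f) (Dom C f).
        Comp C g f = Id C (Dom C f) \<and> Comp C f g = Id C (Cod C f))"

definition ess_surj :: "('o1, 'm1) cat \<Rightarrow> ('o2, 'm2) cat \<Rightarrow> ('o1 \<Rightarrow> 'o2) \<Rightarrow> bool" where
  "ess_surj C D Fo \<longleftrightarrow>
     (\<forall>d\<in>Obj D. \<exists>c\<in>Obj C. \<exists>f\<in>hom D (Fo c) d. iso D f)"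

definition property_F ::
  "('o1, 'm1) cat \<Rightarrow> ('o2, 'm2) cat \<Rightarrow> ('o1 \<Rightarrow> 'o2) \<Rightarrow> ('m1 \<Rightarrow> 'm2) \<Rightarrow> bool" where
  "property_F C D Fo Fm \<longleftrightarrow>
     (\<forall>d\<in>Obj D. \<exists>S. finite S \<and>
        (\<forall>(ci, fi)\<in>S. ci \<in> Obj C \<and> fi \<in> hom D d (Fo ci)) \<and>
        (\<forall>c\<in>Obj C. \<forall>f\<in>hom D d (Fo c).
           \<exists>(ci, fi)\<in>S. \<exists>g\<in>hom C ci c. f = Comp D (Fm g) fi))"

text \<open>Admissible order on morphisms out of c: a family r, indexed by the target c',
  of (reflexive) well-orders on Hom(c,c') such that strict inequality is preserved by
  post-composition.\<close>

definition admissible_order :: "('o, 'm) cat \<Rightarrow> 'o \<Rightarrow> ('o \<Rightarrow> 'm rel) \<Rightarrow> bool" where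
  "admissible_order C c r \<longleftrightarrow>
     (\<forall>c'\<in>Obj C. r c' \<subseteq> hom C c c' \<times> hom C c c' \<and> well_order_on (hom C c c') (r c')) \<and>
     (\<forall>c'\<in>Obj C. \<forall>c''\<in>Obj C. \<forall>f\<in>hom C c c'. \<forall>f'\<in>hom C c c'. \<forall>g\<in>hom C c' c''.
        (f, f') \<in> r c' \<and> f \<noteq> f' \<longrightarrow>
        (Comp C g f, Comp C g f') \<in> r c'' \<and> Comp C g f \<noteq> Comp C g f')"

text \<open>Noetherianity of the poset |c/C|, stated on the underlying preorder
  (f \<le> g iff g = h o f for some h) of all morphisms out of c.\<close>

definition noetherian_under :: "('o, 'm) cat \<Rightarrow> 'o \<Rightarrow> bool" where
  "noetherian_under C c \<longleftrightarrow>
     (\<forall>x :: nat \<Rightarrow> 'm. (\<forall>n. x n \<in> Arr C \<and> Dom C (x n) = c) \<longrightarrow>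
        (\<exists>i j. i < j \<and> (\<exists>h\<in>hom C (Cod C (x i)) (Cod C (x j)). x j = Comp C h (x i))))"

definition grobner :: "('o, 'm) cat \<Rightarrow> bool" where
  "grobner C \<longleftrightarrow> category C \<and>
     (\<forall>c\<in>Obj C. (\<exists>r. admissible_order C c r) \<and> noetherian_under C c)"

text \<open>D is quasi-Groebner, with the witnessing Groebner category living in the
  object/morphism types 'co and 'cm (type quantification is not available in HOL).\<close>

definition quasi_grobner :: "('o, 'm) cat \<Rightarrow> ('co \<times> 'cm) itself \<Rightarrow> bool" where
  "quasi_grobner D T \<longleftrightarrow>
     (\<exists>(C :: ('co, 'cm) cat) Fo Fm.
        grobner C \<and> is_functor C D Fo Fm \<and> ess_surj C D Fo \<and> property_F C D Fo Fm)"

end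

theory Submission
  imports Defs
begin

text \<open>Let \<open>F : C \<rightarrow> B\<close> witness that \<open>B\<close> is quasi-Groebner and form the strict pullback
  \<open>P = C \<times>\<^sub>B A\<close>. Its projection to \<open>C\<close> is again a discrete opfibration, and a discrete
  opfibration reflects the Groebner property: unique lifting makes each \<open>Hom\<^sub>P(x, y)\<close> embed into
  \<open>Hom\<^sub>C\<close>, so admissible orders pull back, and a factorisation \<open>x\<^sub>j = h \<circ> x\<^sub>i\<close> in \<open>C\<close> lifts
  to one in \<open>P\<close>. The projection \<open>P \<rightarrow> A\<close> is essentially surjective because \<open>G\<close> lifts
  isomorphisms to isomorphisms, and it has property (F) because the finitely many test morphisms
  \<open>f\<^sub>i\<close> out of \<open>G a\<close> lift to morphisms out of \<open>a\<close>, through which every morphism out of \<open>a\<close> then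
  factors.\<close>

lemma well_order_on_inv_image:
  assumes wo: "well_order_on B R" and inj: "inj_on h X" and im: "h ` X \<subseteq> B"
  shows "well_order_on X {(p, q). p \<in> X \<and> q \<in> X \<and> (h p, h q) \<in> R}" (is "well_order_on X ?R")
proof -
  have "?R - Relation.Id \<subseteq> inv_image (R - Relation.Id) h"
    using inj by (auto dest: inj_onD)
  moreover have "wf (R - Relation.Id)"
    using wo by (simp add: well_order_on_def)
  ultimately have "wf (?R - Relation.Id)"
    by (blast intro: wf_subset)
  moreover have "linear_order_on X ?R"
  proof -
    have "refl_on B R" "trans R" "antisym R" "total_on B R"
      using wo by (auto simp: order_on_defs)
    then show ?thesis
      using inj im unfolding order_on_defs
      by (auto simp: refl_on_def trans_def antisym_def total_on_def inj_on_def image_subset_iff) metis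
  qed
  ultimately show ?thesis
    by (simp add: well_order_on_def)
qed

lemma Dom_in_Obj: "category C \<Longrightarrow> f \<in> Arr C \<Longrightarrow> Dom C f \<in> Obj C"
  by (simp add: category_def)

lemma Cod_in_Obj: "category C \<Longrightarrow> f \<in> Arr C \<Longrightarrow> Cod C f \<in> Obj C"
  by (simp add: category_def)

lemma Id_in_hom: "category C \<Longrightarrow> a \<in> Obj C \<Longrightarrow> Id C a \<in> hom C a a"
  by (simp add: category_def hom_def)

lemma Comp_in_hom:
  "category C \<Longrightarrow> f \<in> hom C a b \<Longrightarrow> g \<in> hom C b c \<Longrightarrow> Comp C g f \<in> hom C a c"
  by (simp add: category_def hom_def)

lemma iso_inverse:
  assumes "iso C f"
  obtains g where "g \<in> hom C (Cod C f) (Dom C f)" "iso C g"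
proof -
  from assms obtain g where g: "g \<in> hom C (Cod C f) (Dom C f)"
    and "Comp C g f = Id C (Dom C f)" "Comp C f g = Id C (Cod C f)"
    unfolding iso_def by blast
  with assms have "iso C g"
    by (auto simp: iso_def hom_def)
  with g show thesis
    using that by blast
qed

lemma functor_source_category: "is_functor C D Fo Fm \<Longrightarrow> category C"
  by (simp add: is_functor_def)

lemma functor_Obj: "is_functor C D Fo Fm \<Longrightarrow> a \<in> Obj C \<Longrightarrow> Fo a \<in> Obj D"
  by (simp add: is_functor_def)

lemma functor_Arr:
  "is_functor C D Fo Fm \<Longrightarrow> f \<in> Arr C \<Longrightarrow>
     Fm f \<in> Arr D \<and> Dom D (Fm f) = Fo (Dom C f) \<and> Cod D (Fm f) = Fo (Cod C f)"
  by (simp add: is_functor_def)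

lemma functor_hom: "is_functor C D Fo Fm \<Longrightarrow> f \<in> hom C a b \<Longrightarrow> Fm f \<in> hom D (Fo a) (Fo b)"
  by (simp add: is_functor_def hom_def)

lemma functor_Id: "is_functor C D Fo Fm \<Longrightarrow> a \<in> Obj C \<Longrightarrow> Fm (Id C a) = Id D (Fo a)"
  by (simp add: is_functor_def)

lemma functor_Comp:
  "is_functor C D Fo Fm \<Longrightarrow> f \<in> Arr C \<Longrightarrow> g \<in> Arr C \<Longrightarrow> Cod C f = Dom C g \<Longrightarrow>
     Fm (Comp C g f) = Comp D (Fm g) (Fm f)"
  by (simp add: is_functor_def)

lemma dopfib_functor: "discrete_opfibration A B Go Gm \<Longrightarrow> is_functor A B Go Gm"
  by (simp add: discrete_opfibration_def)

lemma dopfib_eqI: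
  assumes "discrete_opfibration A B Go Gm" "f \<in> hom A a b" "f' \<in> hom A a b'" "Gm f = Gm f'"
  shows "f = f'"
proof -
  have G: "is_functor A B Go Gm"
    using assms(1) by (rule dopfib_functor)
  have "a \<in> Obj A" "Gm f \<in> Arr B" "Dom B (Gm f) = Go a"
    using assms(2) functor_Arr[OF G] Dom_in_Obj[OF functor_source_category[OF G]]
    by (auto simp: hom_def)
  with assms show ?thesis
    unfolding discrete_opfibration_def hom_def by (metis (mono_tags, lifting) mem_Collect_eq)
qed

definition lift :: "('ao, 'am) cat \<Rightarrow> ('am \<Rightarrow> 'bm) \<Rightarrow> 'ao \<Rightarrow> 'bm \<Rightarrow> 'am" where
  "lift A Gm a g = (THE f. f \<in> Arr A \<and> Dom A f = a \<and> Gm f = g)"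

lemma dopfib_lift:
  assumes "discrete_opfibration A B Go Gm" "a \<in> Obj A" "g \<in> Arr B" "Dom B g = Go a"
  shows "lift A Gm a g \<in> Arr A" "Dom A (lift A Gm a g) = a" "Gm (lift A Gm a g) = g"
proof -
  have "\<exists>!f. f \<in> Arr A \<and> Dom A f = a \<and> Gm f = g"
    using assms unfolding discrete_opfibration_def by blast
  from theI'[OF this]
  show "lift A Gm a g \<in> Arr A" "Dom A (lift A Gm a g) = a" "Gm (lift A Gm a g) = g"
    unfolding lift_def by auto
qed

lemma dopfib_Go_Cod_lift:
  assumes "discrete_opfibration A B Go Gm" "a \<in> Obj A" "g \<in> Arr B" "Dom B g = Go a"
  shows "Go (Cod A (lift A Gm a g)) = Cod B g"
  using functor_Arr[OF dopfib_functor[OF assms(1)] dopfib_lift(1)[OF assms]] dopfib_lift(3)[OF assms]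
  by simp

lemma dopfib_factor:
  assumes D: "discrete_opfibration A B Go Gm"
    and f: "f \<in> Arr A" and f': "f' \<in> Arr A" "Dom A f' = Dom A f"
    and h: "h \<in> Arr B" "Dom B h = Cod B (Gm f)" and eq: "Gm f' = Comp B h (Gm f)"
  obtains k where "k \<in> hom A (Cod A f) (Cod A f')" "Gm k = h" "f' = Comp A k f"
proof -
  have G: "is_functor A B Go Gm" and cA: "category A"
    using D dopfib_functor functor_source_category by blast+
  have Gf: "Dom B h = Go (Cod A f)"
    using h(2) functor_Arr[OF G f] by simp
  define k where "k = lift A Gm (Cod A f) h"
  have k: "k \<in> hom A (Cod A f) (Cod A k)" "Gm k = h"
    using dopfib_lift[OF D Cod_in_Obj[OF cA f] h(1) Gf] by (auto simp: k_def hom_def)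
  have kf: "Comp A k f \<in> hom A (Dom A f) (Cod A k)"
    using Comp_in_hom[OF cA _ k(1)] f by (simp add: hom_def)
  have "Gm (Comp A k f) = Gm f'"
    using functor_Comp[OF G f] k eq by (simp add: hom_def)
  then have "f' = Comp A k f"
    using dopfib_eqI[OF D kf, of f' "Cod A f'"] f' by (simp add: hom_def)
  with k kf show thesis
    using that[of k] by (simp add: hom_def)
qed

lemma dopfib_lift_iso:
  assumes D: "discrete_opfibration A B Go Gm" and a: "a \<in> Obj A"
    and g: "iso B g" "Dom B g = Go a"
  shows "iso A (lift A Gm a g)"
proof -
  have G: "is_functor A B Go Gm" and cA: "category A"
    using D dopfib_functor functor_source_category by blast+
  obtain g' where g': "g' \<in> hom B (Cod B g) (Dom B g)"
    and g'g: "Comp B g' g = Id B (Dom B g)" and gg': "Comp B g g' = Id B (Cod B g)"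
    using g(1) unfolding iso_def by blast
  define f where "f = lift A Gm a g"
  define a' where "a' = Cod A f"
  have f: "f \<in> hom A a a'" "Gm f = g" and Ga': "Go a' = Cod B g"
    using dopfib_lift[OF D a _ g(2)] dopfib_Go_Cod_lift[OF D a _ g(2)] g(1)
    by (auto simp: f_def a'_def iso_def hom_def)
  have a': "a' \<in> Obj A"
    using Cod_in_Obj[OF cA] f(1) by (simp add: a'_def hom_def)
  define f' where "f' = lift A Gm a' g'"
  have f': "f' \<in> hom A a' (Cod A f')" "Gm f' = g'"
    using dopfib_lift[OF D a'] g' Ga' by (auto simp: f'_def hom_def)
  have "Gm (Comp A f' f) = Gm (Id A a)"
    using functor_Comp[OF G] functor_Id[OF G a] f f' g'g g(2) by (simp add: hom_def)
  then have f'f: "Comp A f' f = Id A a"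
    using dopfib_eqI[OF D Comp_in_hom[OF cA f(1) f'(1)] Id_in_hom[OF cA a]] by blast
  then have f'_hom: "f' \<in> hom A a' a"
    using f' Comp_in_hom[OF cA f(1) f'(1)] Id_in_hom[OF cA a] by (simp add: hom_def)
  have "Gm (Comp A f f') = Gm (Id A a')"
    using functor_Comp[OF G] functor_Id[OF G a'] f f'_hom f'(2) gg' Ga' by (simp add: hom_def)
  then have "Comp A f f' = Id A a'"
    using dopfib_eqI[OF D Comp_in_hom[OF cA f'_hom f(1)] Id_in_hom[OF cA a']] by blast
  with f f'_hom f'f show ?thesis
    unfolding iso_def f_def[symmetric] by (auto simp: hom_def a'_def)
qed

lemma admissible_order_dopfib:
  assumes D: "discrete_opfibration P C Po Pm" and x: "x \<in> Obj P"
    and r: "admissible_order C (Po x) r"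
  shows "admissible_order P x
           (\<lambda>y. {(p, q). p \<in> hom P x y \<and> q \<in> hom P x y \<and> (Pm p, Pm q) \<in> r (Po y)})"
    (is "admissible_order P x ?r")
proof -
  have F: "is_functor P C Po Pm" and cP: "category P"
    using D dopfib_functor functor_source_category by blast+
  have inj: "inj_on Pm (hom P x y)" for y
    using dopfib_eqI[OF D] by (meson inj_onI)
  show ?thesis
    unfolding admissible_order_def
  proof (intro conjI ballI)
    fix y assume y: "y \<in> Obj P"
    show "?r y \<subseteq> hom P x y \<times> hom P x y"
      by auto
    have "well_order_on (hom C (Po x) (Po y)) (r (Po y))"
      using r functor_Obj[OF F y] by (simp add: admissible_order_def)
    moreover have "Pm ` hom P x y \<subseteq> hom C (Po x) (Po y)"
      using functor_hom[OF F] by blast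
    ultimately show "well_order_on (hom P x y) (?r y)"
      using well_order_on_inv_image[OF _ inj] by simp
  next
    fix y z p p' q
    assume y: "y \<in> Obj P" and z: "z \<in> Obj P"
      and p: "p \<in> hom P x y" and p': "p' \<in> hom P x y" and q: "q \<in> hom P y z"
    show "(p, p') \<in> ?r y \<and> p \<noteq> p' \<longrightarrow>
            (Comp P q p, Comp P q p') \<in> ?r z \<and> Comp P q p \<noteq> Comp P q p'"
    proof
      assume "(p, p') \<in> ?r y \<and> p \<noteq> p'"
      then have "(Pm p, Pm p') \<in> r (Po y)" "Pm p \<noteq> Pm p'"
        using inj p p' by (auto dest: inj_onD)
      moreover have "Po y \<in> Obj C" "Po z \<in> Obj C"
        using functor_Obj[OF F] y z by auto
      moreover have "Pm p \<in> hom C (Po x) (Po y)" "Pm p' \<in> hom C (Po x) (Po y)"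
        "Pm q \<in> hom C (Po y) (Po z)"
        using functor_hom[OF F] p p' q by auto
      ultimately have "(Comp C (Pm q) (Pm p), Comp C (Pm q) (Pm p')) \<in> r (Po z)"
        "Comp C (Pm q) (Pm p) \<noteq> Comp C (Pm q) (Pm p')"
        using r unfolding admissible_order_def by blast+
      moreover have "Pm (Comp P q p) = Comp C (Pm q) (Pm p)"
        "Pm (Comp P q p') = Comp C (Pm q) (Pm p')"
        using functor_Comp[OF F] p p' q by (auto simp: hom_def)
      moreover have "Comp P q p \<in> hom P x z" "Comp P q p' \<in> hom P x z"
        using Comp_in_hom[OF cP] p p' q by blast+
      ultimately show "(Comp P q p, Comp P q p') \<in> ?r z \<and> Comp P q p \<noteq> Comp P q p'"
        by auto
    qed
  qed
qed

lemma noetherian_under_dopfib: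
  assumes D: "discrete_opfibration P C Po Pm" and x: "x \<in> Obj P"
    and N: "noetherian_under C (Po x)"
  shows "noetherian_under P x"
  unfolding noetherian_under_def
proof (intro allI impI)
  fix X :: "nat \<Rightarrow> _" assume X: "\<forall>n. X n \<in> Arr P \<and> Dom P (X n) = x"
  have F: "is_functor P C Po Pm"
    using D by (rule dopfib_functor)
  have "\<forall>n. Pm (X n) \<in> Arr C \<and> Dom C (Pm (X n)) = Po x"
    using X functor_Arr[OF F] by auto
  then obtain i j h where ij: "i < j" and h: "h \<in> hom C (Cod C (Pm (X i))) (Cod C (Pm (X j)))"
    and Xj: "Pm (X j) = Comp C h (Pm (X i))"
    using N unfolding noetherian_under_def by (elim allE[of _ "\<lambda>n. Pm (X n)"] impE) blast+
  obtain k where "k \<in> hom P (Cod P (X i)) (Cod P (X j))" "X j = Comp P k (X i)"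
    using dopfib_factor[OF D _ _ _ _ _ Xj] X h by (auto simp: hom_def)
  with ij show "\<exists>i j. i < j \<and> (\<exists>h\<in>hom P (Cod P (X i)) (Cod P (X j)). X j = Comp P h (X i))"
    by blast
qed

lemma grobner_dopfib:
  assumes D: "discrete_opfibration P C Po Pm" and GC: "grobner C"
  shows "grobner P"
proof -
  have F: "is_functor P C Po Pm"
    using D by (rule dopfib_functor)
  have "(\<exists>r. admissible_order P x r) \<and> noetherian_under P x" if x: "x \<in> Obj P" for x
    using GC functor_Obj[OF F x] admissible_order_dopfib[OF D x] noetherian_under_dopfib[OF D x]
    unfolding grobner_def by blast
  then show ?thesis
    using functor_source_category[OF F] unfolding grobner_def by blast
qed

definition pullback_cat ::
  "('co, 'cm) cat \<Rightarrow> ('ao, 'am) cat \<Rightarrow> ('co \<Rightarrow> 'bo) \<Rightarrow> ('cm \<Rightarrow> 'bm) \<Rightarrow> ('ao \<Rightarrow> 'bo) \<Rightarrow> ('am \<Rightarrow> 'bm)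
     \<Rightarrow> ('co \<times> 'ao, 'cm \<times> 'am) cat" where
  "pullback_cat C A Fo Fm Go Gm =
     \<lparr>Obj = {x. fst x \<in> Obj C \<and> snd x \<in> Obj A \<and> Fo (fst x) = Go (snd x)},
      Arr = {p. fst p \<in> Arr C \<and> snd p \<in> Arr A \<and> Fm (fst p) = Gm (snd p)},
      Dom = (\<lambda>p. (Dom C (fst p), Dom A (snd p))),
      Cod = (\<lambda>p. (Cod C (fst p), Cod A (snd p))),
      Id = (\<lambda>x. (Id C (fst x), Id A (snd x))),
      Comp = (\<lambda>q p. (Comp C (fst q) (fst p), Comp A (snd q) (snd p)))\<rparr>"

lemma pullback_cat_simps [simp]:
  "x \<in> Obj (pullback_cat C A Fo Fm Go Gm) \<longleftrightarrow>
     fst x \<in> Obj C \<and> snd x \<in> Obj A \<and> Fo (fst x) = Go (snd x)"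
  "p \<in> Arr (pullback_cat C A Fo Fm Go Gm) \<longleftrightarrow>
     fst p \<in> Arr C \<and> snd p \<in> Arr A \<and> Fm (fst p) = Gm (snd p)"
  "Dom (pullback_cat C A Fo Fm Go Gm) p = (Dom C (fst p), Dom A (snd p))"
  "Cod (pullback_cat C A Fo Fm Go Gm) p = (Cod C (fst p), Cod A (snd p))"
  "Id (pullback_cat C A Fo Fm Go Gm) x = (Id C (fst x), Id A (snd x))"
  "Comp (pullback_cat C A Fo Fm Go Gm) q p = (Comp C (fst q) (fst p), Comp A (snd q) (snd p))"
  by (simp_all add: pullback_cat_def)

lemma pullback_cat_hom [simp]:
  "p \<in> hom (pullback_cat C A Fo Fm Go Gm) x y \<longleftrightarrow>
     fst p \<in> hom C (fst x) (fst y) \<and> snd p \<in> hom A (snd x) (snd y) \<and> Fm (fst p) = Gm (snd p)"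
  by (auto simp: hom_def prod_eq_iff)

lemma pullback_category:
  assumes F: "is_functor C B Fo Fm" and G: "is_functor A B Go Gm"
  shows "category (pullback_cat C A Fo Fm Go Gm)" (is "category ?P")
proof -
  have C: "category C" and A: "category A"
    using F G by (simp_all add: is_functor_def)
  show ?thesis
    unfolding category_def
  proof (intro conjI)
    show "\<forall>p\<in>Arr ?P. Dom ?P p \<in> Obj ?P \<and> Cod ?P p \<in> Obj ?P"
      using C A functor_Arr[OF F] functor_Arr[OF G] by (auto simp: Dom_in_Obj Cod_in_Obj) metis+
  qed (use C A F G in \<open>auto simp: category_def is_functor_def prod_eq_iff\<close>)
qed

lemma pullback_snd_functor:
  assumes F: "is_functor C B Fo Fm" and G: "is_functor A B Go Gm"
  shows "is_functor (pullback_cat C A Fo Fm Go Gm) A snd snd"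
  using pullback_category[OF F G] functor_source_category[OF G]
  by (simp add: is_functor_def)

lemma pullback_fst_dopfib:
  assumes D: "discrete_opfibration A B Go Gm" and F: "is_functor C B Fo Fm"
  shows "discrete_opfibration (pullback_cat C A Fo Fm Go Gm) C fst fst" (is "discrete_opfibration ?P C _ _")
  unfolding discrete_opfibration_def
proof (intro conjI ballI impI)
  have G: "is_functor A B Go Gm"
    using D by (rule dopfib_functor)
  show "is_functor ?P C fst fst"
    using pullback_category[OF F G] functor_source_category[OF F]
    by (simp add: is_functor_def)
  fix x g
  assume x: "x \<in> Obj ?P" and g: "g \<in> Arr C" "Dom C g = fst x"
  define k where "k = lift A Gm (snd x) (Fm g)"
  have "Fm g \<in> Arr B" "Dom B (Fm g) = Go (snd x)"
    using functor_Arr[OF F g(1)] g(2) x by simp_all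
  then have k: "k \<in> hom A (snd x) (Cod A k)" "Gm k = Fm g"
    using dopfib_lift[OF D] x by (auto simp: k_def hom_def)
  show "\<exists>!p. p \<in> Arr ?P \<and> Dom ?P p = x \<and> fst p = g"
  proof
    show "(g, k) \<in> Arr ?P \<and> Dom ?P (g, k) = x \<and> fst (g, k) = g"
      using g k by (auto simp: hom_def prod_eq_iff)
  next
    fix p
    assume p: "p \<in> Arr ?P \<and> Dom ?P p = x \<and> fst p = g"
    then have "snd p = k"
      using dopfib_eqI[OF D _ k(1), of "snd p" "Cod A (snd p)"] k(2) by (auto simp: hom_def)
    with p show "p = (g, k)"
      by (simp add: prod_eq_iff)
  qed
qed

lemma pullback_snd_ess_surj:
  assumes D: "discrete_opfibration A B Go Gm" and F: "is_functor C B Fo Fm" and E: "ess_surj C B Fo"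
  shows "ess_surj (pullback_cat C A Fo Fm Go Gm) A snd"
  unfolding ess_surj_def
proof
  fix a assume a: "a \<in> Obj A"
  have G: "is_functor A B Go Gm"
    using D by (rule dopfib_functor)
  obtain c h where c: "c \<in> Obj C" and h: "h \<in> hom B (Fo c) (Go a)" "iso B h"
    using E functor_Obj[OF G a] unfolding ess_surj_def by blast
  obtain h' where h': "h' \<in> hom B (Go a) (Fo c)" "iso B h'"
    using iso_inverse[OF h(2)] h(1) by (auto simp: hom_def)
  define a' where "a' = Cod A (lift A Gm a h')"
  have l: "Dom A (lift A Gm a h') = a" "iso A (lift A Gm a h')" and Ga': "Go a' = Fo c"
    using dopfib_lift[OF D a] dopfib_Go_Cod_lift[OF D a] dopfib_lift_iso[OF D a] h'
    by (auto simp: a'_def hom_def iso_def)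
  obtain f where f: "f \<in> hom A a' a" "iso A f"
    using iso_inverse[OF l(2)] l(1) by (auto simp: a'_def)
  have "(c, a') \<in> Obj (pullback_cat C A Fo Fm Go Gm)"
    using c Ga' Dom_in_Obj[OF functor_source_category[OF G]] f(1) by (auto simp: hom_def)
  with f show "\<exists>x\<in>Obj (pullback_cat C A Fo Fm Go Gm). \<exists>f\<in>hom A (snd x) a. iso A f"
    by (intro bexI[of _ "(c, a')"]) auto
qed

lemma pullback_factor_through_lift:
  assumes D: "discrete_opfibration A B Go Gm" and F: "is_functor C B Fo Fm" and a: "a \<in> Obj A"
    and fi: "fi \<in> hom B (Go a) (Fo ci)" and g: "g \<in> hom C ci (fst x)" and f: "f \<in> hom A a (snd x)"
    and Gf: "Gm f = Comp B (Fm g) fi"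
  obtains k where "(g, k) \<in> hom (pullback_cat C A Fo Fm Go Gm) (ci, Cod A (lift A Gm a fi)) x"
    "f = Comp A k (lift A Gm a fi)"
proof -
  let ?l = "lift A Gm a fi"
  have l: "?l \<in> Arr A" "Dom A ?l = a" "Gm ?l = fi"
    using dopfib_lift[OF D a] fi by (auto simp: hom_def)
  have "f \<in> Arr A" "Dom A f = Dom A ?l"
    using f l(2) by (simp_all add: hom_def)
  moreover have "Fm g \<in> Arr B" "Dom B (Fm g) = Cod B (Gm ?l)"
    using functor_hom[OF F g] fi l(3) by (auto simp: hom_def)
  moreover have "Gm f = Comp B (Fm g) (Gm ?l)"
    using Gf l(3) by simp
  ultimately obtain k where k: "k \<in> hom A (Cod A ?l) (Cod A f)" "Gm k = Fm g" "f = Comp A k ?l"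
    by (rule dopfib_factor[OF D l(1)])
  have "Cod A f = snd x"
    using f by (simp add: hom_def)
  with g k(1,2) have "(g, k) \<in> hom (pullback_cat C A Fo Fm Go Gm) (ci, Cod A ?l) x"
    by simp
  then show thesis
    using k(3) by (rule that)
qed

lemma pullback_snd_property_F:
  assumes D: "discrete_opfibration A B Go Gm" and F: "is_functor C B Fo Fm"
    and PF: "property_F C B Fo Fm"
  shows "property_F (pullback_cat C A Fo Fm Go Gm) A snd snd"
  unfolding property_F_def
proof
  fix a assume a: "a \<in> Obj A"
  let ?P = "pullback_cat C A Fo Fm Go Gm"
  let ?l = "lift A Gm a"
  have G: "is_functor A B Go Gm"
    using D by (rule dopfib_functor)
  obtain S where S: "finite S"
    and S_hom: "\<forall>(ci, fi)\<in>S. ci \<in> Obj C \<and> fi \<in> hom B (Go a) (Fo ci)"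
    and S_factor: "\<forall>c\<in>Obj C. \<forall>f\<in>hom B (Go a) (Fo c).
                     \<exists>(ci, fi)\<in>S. \<exists>g\<in>hom C ci c. f = Comp B (Fm g) fi"
    using bspec[OF PF[unfolded property_F_def] functor_Obj[OF G a]] by (elim exE conjE)
  define S' where "S' = (\<lambda>(ci, fi). ((ci, Cod A (?l fi)), ?l fi)) ` S"
  have lift_S: "(ci, Cod A (?l fi)) \<in> Obj ?P" "?l fi \<in> hom A a (Cod A (?l fi))"
    if "(ci, fi) \<in> S" for ci fi
    using S_hom[rule_format, OF that, unfolded prod.case] dopfib_lift[OF D a]
      dopfib_Go_Cod_lift[OF D a] Cod_in_Obj[OF functor_source_category[OF G]]
    by (auto simp: hom_def)
  show "\<exists>S'. finite S' \<and> (\<forall>(y, l)\<in>S'. y \<in> Obj ?P \<and> l \<in> hom A a (snd y)) \<and>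
      (\<forall>x\<in>Obj ?P. \<forall>f\<in>hom A a (snd x). \<exists>(y, l)\<in>S'. \<exists>p\<in>hom ?P y x. f = Comp A (snd p) l)"
  proof (intro exI[of _ S'] conjI)
    show "finite S'"
      using S by (simp add: S'_def)
    show "\<forall>(y, l)\<in>S'. y \<in> Obj ?P \<and> l \<in> hom A a (snd y)"
      using lift_S by (auto simp: S'_def)
    show "\<forall>x\<in>Obj ?P. \<forall>f\<in>hom A a (snd x). \<exists>(y, l)\<in>S'. \<exists>p\<in>hom ?P y x. f = Comp A (snd p) l"
    proof (intro ballI)
      fix x f assume x: "x \<in> Obj ?P" and f: "f \<in> hom A a (snd x)"
      have "Gm f \<in> hom B (Go a) (Fo (fst x))"
        using functor_hom[OF G f] x by simp
      then obtain ci fi g where cfi: "(ci, fi) \<in> S" and g: "g \<in> hom C ci (fst x)"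
        and Gf: "Gm f = Comp B (Fm g) fi"
        using S_factor x by fastforce
      have fi: "fi \<in> hom B (Go a) (Fo ci)"
        using S_hom cfi by auto
      obtain k where "(g, k) \<in> hom ?P (ci, Cod A (?l fi)) x" "f = Comp A k (?l fi)"
        using pullback_factor_through_lift[OF D F a fi g f Gf] .
      then have "\<exists>p\<in>hom ?P (ci, Cod A (?l fi)) x. f = Comp A (snd p) (?l fi)"
        by (intro bexI[of _ "(g, k)"]) simp_all
      moreover have "((ci, Cod A (?l fi)), ?l fi) \<in> S'"
        using cfi by (force simp: S'_def)
      ultimately show "\<exists>(y, l)\<in>S'. \<exists>p\<in>hom ?P y x. f = Comp A (snd p) l"
        by (intro bexI[of _ "((ci, Cod A (?l fi)), ?l fi)"]) simp_all
    qed
  qed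
qed

theorem lemma1p18:
  fixes A :: "('ao, 'am) cat" and B :: "('bo, 'bm) cat"
    and Go :: "'ao \<Rightarrow> 'bo" and Gm :: "'am \<Rightarrow> 'bm"
  assumes "discrete_opfibration A B Go Gm"
    and "quasi_grobner B TYPE('co \<times> 'cm)"
  shows "quasi_grobner A TYPE(('co \<times> 'ao) \<times> ('cm \<times> 'am))"
proof -
  obtain C :: "('co, 'cm) cat" and Fo Fm where GC: "grobner C" and F: "is_functor C B Fo Fm"
    and E: "ess_surj C B Fo" and PF: "property_F C B Fo Fm"
    using assms(2) unfolding quasi_grobner_def by blast
  let ?P = "pullback_cat C A Fo Fm Go Gm"
  have "grobner ?P"
    using grobner_dopfib[OF pullback_fst_dopfib[OF assms(1) F] GC] .
  moreover have "is_functor ?P A snd snd"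
    using pullback_snd_functor[OF F dopfib_functor[OF assms(1)]] .
  moreover have "ess_surj ?P A snd"
    using pullback_snd_ess_surj[OF assms(1) F E] .
  moreover have "property_F ?P A snd snd"
    using pullback_snd_property_F[OF assms(1) F PF] .
  ultimately show ?thesis
    unfolding quasi_grobner_def by blast
qed

end
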